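(* Let $k\ge2$, $\beta>0$, $\lambda>0$, and $\mathcal A\subset\{1,\dots,p\}$ with $|\mathcal A|=k$. If \[ 2\lambda_n>\frac{g(\tau_n)}{G(\tau_n)}, \] where $G,g$ are the $N(0,1)$ cumulative distribution function and density, $\lambda_n=\lambda\sqrt n$ and $\tau_n=\sqrt n(\beta-\lambda)$, then $\frac{d}{dc}\psi_\lambda(c\mid k,\beta)\big|_{c=0}>0$. Hence there exists $c_\lambda>0$ with $\psi_\lambda(c_\lambda\mid k,\beta)>\psi_\lambda(0\mid k,\beta)$.
   Context: Fix integers $n\ge1$ and $2\le k<p$. $\mathbf J$ is an all-ones matrix; vector inequalities and absolute values are componentwise. For real $c$ with $-(k-1)^{-1}<c<1$ let $\mathbf C=(1-c)\mathbf I_p+c\mathbf J_p$. For $\mathcal A$ with complement $\mathcal I$ let $\mathbf C_{\mathcal A},\mathbf C_{\mathcal I},\mathbf C_{\mathcal I\mathcal A},\mathbf C_{\mathcal A\mathcal I}$ be the submatrices. For a sign vector $\boldsymbol z_{\mathcal A}\in\{-1,1\}^k$ with $\mathbf Z_{\mathcal A}=\mathrm{Diag}(\boldsymbol z_{\mathcal A})$ and $\boldsymbol\beta_{\mathcal A}$ with that sign vector: $P(S_\lambda\mid c,\boldsymbol\beta_{\mathcal A})=P(\boldsymbol u<\sqrt n\,\mathbf Z_{\mathcal A}\boldsymbol\beta_{\mathcal A})$ with $\boldsymbol u\sim N(\lambda\sqrt n\,\mathbf Z_{\mathcal A}\mathbf C_{\mathcal A}^{-1}\boldsymbol z_{\mathcal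 A},\ \mathbf Z_{\mathcal A}\mathbf C_{\mathcal A}^{-1}\mathbf Z_{\mathcal A})$; $P(I_\lambda\mid c,\boldsymbol z_{\mathcal A})=P(|\boldsymbol v|\le\lambda\sqrt n\mathbf 1)$ with $\boldsymbol v\sim N(\lambda\sqrt n\,\mathbf C_{\mathcal I\mathcal A}\mathbf C_{\mathcal A}^{-1}\boldsymbol z_{\mathcal A},\ \mathbf C_{\mathcal I}-\mathbf C_{\mathcal I\mathcal A}\mathbf C_{\mathcal A}^{-1}\mathbf C_{\mathcal A\mathcal I})$. The known-sign criterion is $\psi_\lambda(c\mid k,\beta)=P(S_\lambda\mid c,\boldsymbol\beta_{\mathcal A}=\beta\mathbf 1)\times P(I_\lambda\mid c,\boldsymbol z_{\mathcal A}=\mathbf 1)$ (its value does not depend on which $\mathcal A$ of size $k$ is used). *)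

theory Defs
  imports "HOL-Analysis.Analysis" "HOL-Probability.Probability"
begin

definition mvn_density :: "real^'n \<Rightarrow> real^'n^'n \<Rightarrow> real^'n \<Rightarrow> real" where
  "mvn_density mu Sig x =
     exp (- (1/2) * ((x - mu) \<bullet> (matrix_inv Sig *v (x - mu))))
     / sqrt ((2 * pi) ^ CARD('n) * det Sig)"

definition mvn_prob :: "real^'n \<Rightarrow> real^'n^'n \<Rightarrow> (real^'n) set \<Rightarrow> real" where
  "mvn_prob mu Sig S = (\<integral>x. indicator S x * mvn_density mu Sig x \<partial>lborel)"

definition Diag :: "real^'n \<Rightarrow> real^'n^'n" where
  "Diag z = (\<chi> i j. if i = j then z $ i else 0)"

text \<open>Equicorrelation matrix (1-c) I + c J, diagonal blocks C_A (index type 'a),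
  C_I (index type 'b), and off-diagonal blocks C_IA, C_AI (all entries c).\<close>
definition equicorr :: "real \<Rightarrow> real^'n^'n" where
  "equicorr c = (\<chi> i j. if i = j then 1 else c)"

definition offblock :: "real \<Rightarrow> real^'m^'n" where
  "offblock c = (\<chi> i j. c)"

definition PS :: "nat \<Rightarrow> real \<Rightarrow> real \<Rightarrow> real^'a \<Rightarrow> real" where
  "PS n lam c betaA =
     (let z = (\<chi> i. sgn (betaA $ i)); Z = Diag z; CAi = matrix_inv (equicorr c :: real^'a^'a)
      in mvn_prob ((lam * sqrt n) *\<^sub>R (Z *v (CAi *v z))) (Z ** CAi ** Z)
           {u. \<forall>i. u $ i < (sqrt n *\<^sub>R (Z *v betaA)) $ i})"

definition PI :: "nat \<Rightarrow> real \<Rightarrow> real \<Rightarrow> real^'a::finite \<Rightarrow> ('b::finite) itself \<Rightarrow> real" where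
  "PI n lam c z _ =
     (let CAi = matrix_inv (equicorr c :: real^'a^'a);
          CIA = (offblock c :: real^'a^'b); CAI = (offblock c :: real^'b^'a)
      in mvn_prob ((lam * sqrt n) *\<^sub>R (CIA *v (CAi *v z)))
           ((equicorr c :: real^'b^'b) - CIA ** CAi ** CAI)
           {v :: real^'b. \<forall>i. \<bar>v $ i\<bar> \<le> lam * sqrt n})"

text \<open>Known-sign criterion psi_lambda(c | k, beta), with k = CARD('a), p = CARD('a) + CARD('b).\<close>
definition psi :: "('a::finite) itself \<Rightarrow> ('b::finite) itself \<Rightarrow> nat \<Rightarrow> real \<Rightarrow> real \<Rightarrow> real \<Rightarrow> real" where
  "psi _ B n lam beta c =
     PS n lam c (\<chi> i::'a. beta) * PI n lam c (\<chi> i::'a. 1) B"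

definition std_normal_cdf :: "real \<Rightarrow> real" where
  "std_normal_cdf t = (\<integral>x. indicator {..t} x * std_normal_density x \<partial>lborel)"

end

(* At c = 0 both Gaussians have identity covariance, and for c near 0 their precision matrices have
   the form a I + b J.  Differentiating under the integral sign at c = 0, where the density
   factorises over the coordinates, expresses the derivative of the probability of a box T^n through
   the one-dimensional integrals I0 = \<integral>\<^sub>T \<phi>(t - \<mu>) dt and I1 = \<integral>\<^sub>T (t - \<mu>) \<phi>(t - \<mu>) dt.
   For the inactive block the box is symmetric and \<mu> = 0, so I1 = 0 and P(I_\<lambda>) is stationary.
   For the active block the box is a half-line, I0 = \<surd>(2\<pi>) G(\<tau>\<^sub>n) and I1 = -\<surd>(2\<pi>) g(\<tau>\<^sub>n), and the
   derivative of P(S_\<lambda>) is a positive multiple of 2 \<lambda>\<^sub>n G(\<tau>\<^sub>n) - g(\<tau>\<^sub>n).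
   Hence \<psi>'(0) = P(S_\<lambda>)'(0) P(I_\<lambda>) > 0. *)
theory Submission
  imports Defs "HOL-Real_Asymp.Real_Asymp"
begin

section \<open>Integrals on real^n\<close>

lemma integral_lborel_prod_Basis:
  fixes f :: "'a::euclidean_space \<Rightarrow> real \<Rightarrow> real"
  assumes int: "\<And>b. b \<in> Basis \<Longrightarrow> integrable lborel (f b)"
  shows "integrable lborel (\<lambda>x::'a. \<Prod>b\<in>Basis. f b (x \<bullet> b))"
    and "(\<integral>x. (\<Prod>b\<in>Basis. f b (x \<bullet> b)) \<partial>lborel) = (\<Prod>b\<in>Basis. \<integral>t. f b t \<partial>lborel)"
proof -
  interpret product_sigma_finite "\<lambda>_::'a. lborel :: real measure"
    by standard
  have coord: "(\<Prod>b\<in>Basis. f b ((\<Sum>b'\<in>Basis. g b' *\<^sub>R b') \<bullet> b)) = (\<Prod>b\<in>Basis. f b (g b))"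
    for g :: "'a \<Rightarrow> real"
    by (intro prod.cong refl) (simp add: inner_sum_left inner_Basis if_distrib sum.delta cong: if_cong)
  have meas: "(\<lambda>x::'a. \<Prod>b\<in>Basis. f b (x \<bullet> b)) \<in> borel_measurable borel"
    using int by (intro borel_measurable_prod)
      (auto intro!: measurable_compose[OF _ borel_measurable_integrable[OF int]])
  have meas_sum: "(\<lambda>g::'a\<Rightarrow>real. \<Sum>b\<in>Basis. g b *\<^sub>R b) \<in> measurable (\<Pi>\<^sub>M b\<in>Basis. lborel) borel"
    by measurable
  have "integrable (\<Pi>\<^sub>M b\<in>Basis. lborel) (\<lambda>g. \<Prod>b\<in>Basis. f b (g b))"
    by (rule product_integrable_prod) (auto intro: int)
  then show "integrable lborel (\<lambda>x::'a. \<Prod>b\<in>Basis. f b (x \<bullet> b))"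
    using meas by (subst lborel_eq, subst integrable_distr_eq[OF meas_sum]) (simp_all add: coord)
  have "(\<integral>x. (\<Prod>b\<in>Basis. f b (x \<bullet> b)) \<partial>lborel)
      = (\<integral>g. (\<Prod>b\<in>Basis. f b (g b)) \<partial>(\<Pi>\<^sub>M b\<in>Basis. lborel))"
    using meas by (subst lborel_eq, subst integral_distr[OF meas_sum]) (simp_all add: coord)
  also have "\<dots> = (\<Prod>b\<in>Basis. \<integral>t. f b t \<partial>lborel)"
    by (rule product_integral_prod) (auto intro: int)
  finally show "(\<integral>x. (\<Prod>b\<in>Basis. f b (x \<bullet> b)) \<partial>lborel) = (\<Prod>b\<in>Basis. \<integral>t. f b t \<partial>lborel)" .
qed

lemma prod_Basis_vec:
  fixes g :: "real^'n \<Rightarrow> 'c::comm_monoid_mult"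
  shows "(\<Prod>b\<in>Basis. g b) = (\<Prod>i\<in>UNIV. g (axis i 1))"
proof -
  have "(Basis :: (real^'n) set) = (\<lambda>i. axis i 1) ` UNIV"
    by (auto simp: Basis_vec_def)
  moreover have "inj (\<lambda>i::'n. axis i (1::real))"
    by (auto simp: inj_def axis_eq_axis)
  ultimately show ?thesis
    using prod.reindex[of "\<lambda>i::'n. axis i (1::real)" UNIV g] by (simp add: comp_def)
qed

lemma integral_lborel_prod_vec:
  fixes f :: "'n::finite \<Rightarrow> real \<Rightarrow> real"
  assumes int: "\<And>i. integrable lborel (f i)"
  shows "integrable lborel (\<lambda>x::real^'n. \<Prod>i\<in>UNIV. f i (x $ i))"
    and "(\<integral>x. (\<Prod>i\<in>UNIV. f i (x $ i)) \<partial>(lborel :: (real^'n) measure)) = (\<Prod>i\<in>UNIV. \<integral>t. f i t \<partial>lborel)"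
proof -
  define F where "F b = f (SOME i. b = axis i (1::real))" for b :: "real^'n"
  have F: "F (axis i 1) = f i" for i
    unfolding F_def by (rule arg_cong[where f=f]) (rule some_equality, auto simp: axis_eq_axis)
  have intF: "b \<in> Basis \<Longrightarrow> integrable lborel (F b)" for b :: "real^'n"
    by (auto simp: Basis_vec_def F int)
  have "(\<Prod>i\<in>UNIV. f i (x $ i)) = (\<Prod>b\<in>Basis. F b (x \<bullet> b))" for x :: "real^'n"
    by (simp add: prod_Basis_vec F inner_axis)
  moreover have "(\<Prod>i\<in>UNIV. \<integral>t. f i t \<partial>lborel) = (\<Prod>b\<in>(Basis :: (real^'n) set). \<integral>t. F b t \<partial>lborel)"
    by (simp add: prod_Basis_vec F)
  ultimately show "integrable lborel (\<lambda>x::real^'n. \<Prod>i\<in>UNIV. f i (x $ i))"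
    and "(\<integral>x. (\<Prod>i\<in>UNIV. f i (x $ i)) \<partial>(lborel :: (real^'n) measure)) = (\<Prod>i\<in>UNIV. \<integral>t. f i t \<partial>lborel)"
    using integral_lborel_prod_Basis[OF intF] by simp_all
qed

lemma
  fixes p q :: "real \<Rightarrow> real" and J :: "'n::finite set"
  assumes "integrable lborel p" "integrable lborel q"
  shows integrable_lborel_prod_vec_if:
      "integrable (lborel :: (real^'n) measure) (\<lambda>x. \<Prod>l\<in>UNIV. if l \<in> J then p (x $ l) else q (x $ l))"
    and integral_lborel_prod_vec_if:
      "(\<integral>x. (\<Prod>l\<in>UNIV. if l \<in> J then p (x $ l) else q (x $ l)) \<partial>(lborel :: (real^'n) measure))
       = (\<integral>t. p t \<partial>lborel) ^ card J * (\<integral>t. q t \<partial>lborel) ^ (CARD('n) - card J)"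
proof -
  have int: "integrable lborel (\<lambda>t. if l \<in> J then p t else q t)" for l
    using assms by (cases "l \<in> J") simp_all
  show "integrable (lborel :: (real^'n) measure) (\<lambda>x. \<Prod>l\<in>UNIV. if l \<in> J then p (x $ l) else q (x $ l))"
    by (rule integral_lborel_prod_vec(1)[OF int])
  have "(\<integral>x. (\<Prod>l\<in>UNIV. if l \<in> J then p (x $ l) else q (x $ l)) \<partial>(lborel :: (real^'n) measure))
      = (\<Prod>l\<in>UNIV. if l \<in> J then \<integral>t. p t \<partial>lborel else \<integral>t. q t \<partial>lborel)"
    unfolding integral_lborel_prod_vec(2)[OF int] by (intro prod.cong) auto
  also have "\<dots> = (\<integral>t. p t \<partial>lborel) ^ card J * (\<integral>t. q t \<partial>lborel) ^ (CARD('n) - card J)"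
    by (simp add: prod.If_cases Diff_eq[symmetric] card_Diff_subset)
  finally show "(\<integral>x. (\<Prod>l\<in>UNIV. if l \<in> J then p (x $ l) else q (x $ l)) \<partial>(lborel :: (real^'n) measure))
       = (\<integral>t. p t \<partial>lborel) ^ card J * (\<integral>t. q t \<partial>lborel) ^ (CARD('n) - card J)" .
qed

lemma prod_set_in_borel:
  assumes "T \<in> sets borel"
  shows "{x::real^'n. \<forall>i. x $ i \<in> T} \<in> sets borel"
proof -
  have "{x::real^'n. \<forall>i. x $ i \<in> T} = (\<Inter>i. (\<lambda>x. x $ i) -` T)"
    by auto
  also have "\<dots> \<in> sets borel"
    using assms by (intro sets.countable_INT) (auto intro!: measurable_sets_borel[where f="\<lambda>x::real^'n. x $ i" for i])
  finally show ?thesis .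
qed

lemma has_real_derivative_integral_dominated:
  fixes f f' :: "real \<Rightarrow> 'a \<Rightarrow> real" and M :: "'a measure"
  assumes I: "open I" "convex I" "c0 \<in> I"
    and meas: "\<And>c. c \<in> I \<Longrightarrow> f c \<in> borel_measurable M" "f' c0 \<in> borel_measurable M"
    and int: "\<And>c. c \<in> I \<Longrightarrow> integrable M (f c)"
    and deriv: "\<And>c x. c \<in> I \<Longrightarrow> ((\<lambda>c. f c x) has_real_derivative f' c x) (at c)"
    and dom: "integrable M w" "\<And>c x. c \<in> I \<Longrightarrow> \<bar>f' c x\<bar> \<le> w x"
  shows "((\<lambda>c. \<integral>x. f c x \<partial>M) has_real_derivative (\<integral>x. f' c0 x \<partial>M)) (at c0)"
proof -
  have lipschitz: "\<bar>f c x - f c0 x\<bar> \<le> w x * \<bar>c - c0\<bar>" if "c \<in> I" for c x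
    using field_differentiable_bound[OF I(2), of "\<lambda>c. f c x" "\<lambda>c. f' c x" "w x" c c0]
      deriv dom(2) that I(3) by (auto intro: has_field_derivative_at_within)
  have "((\<lambda>c. ((\<integral>x. f c x \<partial>M) - (\<integral>x. f c0 x \<partial>M)) / (c - c0)) \<longlongrightarrow> (\<integral>x. f' c0 x \<partial>M)) (at c0 within I)"
    unfolding tendsto_at_iff_sequentially comp_def
  proof (intro allI impI)
    fix X :: "nat \<Rightarrow> real"
    assume X: "\<forall>i. X i \<in> I - {c0}" and X_lim: "X \<longlonglongrightarrow> c0"
    define q where "q i x = (f (X i) x - f c0 x) / (X i - c0)" for i x
    have quotient: "((\<integral>x. f (X i) x \<partial>M) - (\<integral>x. f c0 x \<partial>M)) / (X i - c0) = (\<integral>x. q i x \<partial>M)" for i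
      using X int I(3) by (simp add: q_def)
    have "(\<lambda>i. \<integral>x. q i x \<partial>M) \<longlonglongrightarrow> (\<integral>x. f' c0 x \<partial>M)"
    proof (rule integral_dominated_convergence[OF _ _ dom(1)])
      show "q i \<in> borel_measurable M" for i
        unfolding q_def using X I(3)
        by (intro borel_measurable_divide borel_measurable_diff meas(1) borel_measurable_const) auto
      show "f' c0 \<in> borel_measurable M"
        by (rule meas(2))
      have X_at: "filterlim X (at c0) sequentially"
        using X X_lim by (auto simp: filterlim_at)
      show "AE x in M. (\<lambda>i. q i x) \<longlonglongrightarrow> f' c0 x"
        using filterlim_compose[OF deriv[OF I(3), unfolded has_field_derivative_iff] X_at]
        by (simp add: q_def)
      show "AE x in M. norm (q i x) \<le> w x" for i
        using lipschitz[of "X i"] X by (simp add: q_def abs_divide divide_le_eq)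
    qed
    then show "(\<lambda>i. ((\<integral>x. f (X i) x \<partial>M) - (\<integral>x. f c0 x \<partial>M)) / (X i - c0)) \<longlonglongrightarrow> (\<integral>x. f' c0 x \<partial>M)"
      by (simp add: quotient)
  qed
  then show ?thesis
    using at_within_open[OF I(3,1)] by (simp add: has_field_derivative_iff)
qed

section \<open>Matrices of the form a I + b J\<close>

definition equi_mat :: "real \<Rightarrow> real \<Rightarrow> real^'n^'n" where
  "equi_mat a b = (\<chi> i j. (if i = j then a else 0) + b)"

lemma equi_mat_nth: "equi_mat a b $ i $ j = (if i = j then a else 0) + b"
  by (simp add: equi_mat_def)

lemma equi_mat_1_0: "equi_mat 1 0 = mat 1"
  by (simp add: equi_mat_def mat_def vec_eq_iff)

lemma equicorr_eq_equi_mat: "equicorr c = equi_mat (1 - c) c"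
  by (simp add: equicorr_def equi_mat_def vec_eq_iff)

lemma equi_mat_mult:
  "(equi_mat a b :: real^'n^'n) ** equi_mat a' b' = equi_mat (a * a') (a * b' + b * a' + real CARD('n) * b * b')"
  by (simp add: equi_mat_def matrix_matrix_mult_def vec_eq_iff sum.distrib
      if_distrib[where f="\<lambda>x. x * _"] if_distrib[where f="\<lambda>x. _ * x"] distrib_left distrib_right
      sum.delta algebra_simps cong: if_cong)

lemma equi_mat_mult_vec:
  "(equi_mat a b :: real^'n^'n) *v v = (\<chi> i. a * v $ i + b * (\<Sum>j\<in>UNIV. v $ j))"
  by (simp add: equi_mat_def matrix_vector_mult_def vec_eq_iff distrib_right sum.distrib
      if_distrib[where f="\<lambda>x. x * _"] sum_distrib_left cong: if_cong)

lemma inner_equi_mat_mult_vec: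
  fixes y :: "real^'n"
  shows "y \<bullet> (equi_mat a b *v y) = a * (\<Sum>i\<in>UNIV. (y $ i)^2) + b * (\<Sum>i\<in>UNIV. y $ i)^2"
  by (simp add: equi_mat_mult_vec inner_vec_def power2_eq_square sum_distrib_left sum_distrib_right
      distrib_left sum.distrib algebra_simps)

lemma equi_mat_minus_const: "(equi_mat a b :: real^'n^'n) - (\<chi> i j. x) = equi_mat a (b - x)"
  by (simp add: equi_mat_def vec_eq_iff)

lemma offblock_mult_equi_mat:
  "(offblock c :: real^'a^'b) ** (equi_mat a b :: real^'a^'a) = (\<chi> i j. c * (a + b * real CARD('a)))"
  by (simp add: offblock_def equi_mat_def matrix_matrix_mult_def vec_eq_iff sum.distrib
      if_distrib[where f="\<lambda>x. _ * x"] distrib_left sum.delta cong: if_cong)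

lemma const_mat_mult_offblock:
  "((\<chi> i j. x) :: real^'a^'b) ** (offblock c :: real^'b^'a) = (\<chi> i j. real CARD('a) * x * c)"
  by (simp add: offblock_def matrix_matrix_mult_def vec_eq_iff)

lemma offblock_mult_vec: "(offblock c :: real^'a^'b) *v v = (\<chi> i. c * (\<Sum>j\<in>UNIV. v $ j))"
  by (simp add: offblock_def matrix_vector_mult_def vec_eq_iff sum_distrib_left)

lemma matrix_inv_eqI:
  fixes A B :: "real^'n^'n"
  assumes "B ** A = mat 1"
  shows "matrix_inv A = B"
proof -
  have "A ** B = mat 1"
    using assms matrix_left_right_inverse by blast
  then have "\<exists>A'. A ** A' = mat 1 \<and> A' ** A = mat 1"
    using assms by blast
  then have "A ** matrix_inv A = mat 1 \<and> matrix_inv A ** A = mat 1"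
    unfolding matrix_inv_def by (rule someI_ex)
  then have "matrix_inv A = (B ** A) ** matrix_inv A"
    using assms by simp
  also have "\<dots> = B"
    using \<open>A ** matrix_inv A = mat 1 \<and> _\<close> by (simp add: matrix_mul_assoc[symmetric])
  finally show ?thesis .
qed

lemma equi_mat_inverse_mult:
  assumes "a \<noteq> 0" "a + real CARD('n) * b \<noteq> 0"
  shows "equi_mat (1 / a) (- b / (a * (a + real CARD('n) * b))) ** (equi_mat a b :: real^'n^'n) = mat 1"
proof -
  have "a * (a + real CARD('n) * b) \<noteq> 0"
    using assms by simp
  then show ?thesis
    unfolding equi_mat_mult equi_mat_1_0[symmetric] using assms
    by (intro arg_cong2[where f=equi_mat]) (auto simp: field_simps)
qed

lemma matrix_inv_equi_mat:
  assumes "a \<noteq> 0" "a + real CARD('n) * b \<noteq> 0"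
  shows "matrix_inv (equi_mat a b :: real^'n^'n) = equi_mat (1 / a) (- b / (a * (a + real CARD('n) * b)))"
  by (rule matrix_inv_eqI[OF equi_mat_inverse_mult[OF assms]])

lemma det_equi_mat:
  "det (equi_mat a b :: real^'n^'n) =
     (\<Sum>p | p permutes (UNIV :: 'n set). of_int (sign p) * (a + b) ^ card {i. p i = i} * b ^ card {i. p i \<noteq> i})"
proof -
  have "(\<Prod>i\<in>UNIV. (equi_mat a b :: real^'n^'n) $ i $ p i) = (a + b) ^ card {i. p i = i} * b ^ card {i. p i \<noteq> i}"
    for p :: "'n \<Rightarrow> 'n"
  proof -
    have "(\<Prod>i\<in>UNIV. (equi_mat a b :: real^'n^'n) $ i $ p i) = (\<Prod>i\<in>UNIV. if p i = i then a + b else b)"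
      by (intro prod.cong) (auto simp: equi_mat_nth)
    also have "\<dots> = (a + b) ^ card {i. p i = i} * b ^ card (- {i. p i = i})"
      by (simp add: prod.If_cases Collect_neg_eq)
    finally show ?thesis
      by (simp add: Collect_neg_eq)
  qed
  then show ?thesis
    by (simp add: det_def mult.assoc)
qed

lemma card_moved_points_ge_2:
  assumes "p permutes (UNIV :: 'n::finite set)" "p \<noteq> id"
  shows "2 \<le> card {i. p i \<noteq> i}"
proof -
  obtain i where i: "p i \<noteq> i"
    using assms(2) by (auto simp: fun_eq_iff)
  then have "p (p i) \<noteq> p i"
    using permutes_inj[OF assms(1)] by (metis injD)
  then have "{i, p i} \<subseteq> {i. p i \<noteq> i}"
    using i by auto
  then have "card {i, p i} \<le> card {i. p i \<noteq> i}"
    by (intro card_mono) auto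
  then show ?thesis
    using i by auto
qed

(* Every term of the Leibniz expansion except the diagonal one carries the factor b\<^sup>2. *)
lemma det_equi_mat_has_real_derivative:
  fixes a b :: "real \<Rightarrow> real"
  assumes diag: "((\<lambda>c. a c + b c) has_real_derivative 0) (at 0)"
    and off: "(b has_real_derivative b') (at 0)" "b 0 = 0"
  shows "((\<lambda>c. det (equi_mat (a c) (b c) :: real^'n::finite^'n)) has_real_derivative 0) (at 0)"
proof -
  have terms: "((\<lambda>c. of_int (sign p) * (a c + b c) ^ card {i. p i = i} * b c ^ card {i. p i \<noteq> i})
      has_real_derivative 0) (at 0)" if p: "p permutes (UNIV :: 'n set)" for p
  proof (cases "p = id")
    case True
    then show ?thesis
      using DERIV_power[OF diag, of "CARD('n)"] by simp
  next
    case False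
    define l where "l = card {i. p i \<noteq> i}"
    have "2 \<le> l"
      unfolding l_def by (rule card_moved_points_ge_2[OF p False])
    then have "((\<lambda>c. b c ^ l) has_real_derivative 0) (at 0)"
      using DERIV_power[OF off(1), of l] off(2) by (simp add: power_0_left)
    from DERIV_mult[OF DERIV_cmult[OF DERIV_power[OF diag]] this, of "of_int (sign p)" "card {i. p i = i}"]
    show ?thesis
      by (simp add: l_def off(2) \<open>2 \<le> l\<close>)
  qed
  show ?thesis
    unfolding det_equi_mat by (rule DERIV_sum[where f'="\<lambda>_. 0", simplified]) (simp add: terms)
qed

lemma sqrt_det_equi_mat_has_real_derivative:
  fixes A B :: "real \<Rightarrow> real"
  assumes "(A has_real_derivative A') (at 0)" "(B has_real_derivative B') (at 0)"
    and "A 0 = 1" "B 0 = 0" "A' + B' = 0"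
  shows "((\<lambda>c. sqrt (det (equi_mat (A c) (B c) :: real^'n::finite^'n))) has_real_derivative 0) (at 0)"
proof -
  have "((\<lambda>c. det (equi_mat (A c) (B c) :: real^'n^'n)) has_real_derivative 0) (at 0)"
    using DERIV_add[OF assms(1,2)] assms(2-5) by (intro det_equi_mat_has_real_derivative) simp_all
  moreover have "0 < det (equi_mat (A 0) (B 0) :: real^'n^'n)"
    by (simp add: assms(3,4) equi_mat_1_0)
  ultimately show ?thesis
    using DERIV_chain2[OF DERIV_real_sqrt] by (metis mult_zero_right)
qed

lemma Diag_one: "Diag (\<chi> i. 1) = mat 1"
  by (simp add: Diag_def mat_def vec_eq_iff)

lemma matrix_inv_equicorr:
  defines "k \<equiv> real CARD('n)"
  assumes "1 - c \<noteq> 0" "1 + (k - 1) * c \<noteq> 0"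
  shows "matrix_inv (equicorr c :: real^'n^'n) = equi_mat (1 / (1 - c)) (- c / ((1 - c) * (1 + (k - 1) * c)))"
proof -
  have eq: "1 - c + k * c = 1 + (k - 1) * c"
    by (simp add: algebra_simps)
  have "matrix_inv (equi_mat (1 - c) c :: real^'n^'n) = equi_mat (1 / (1 - c)) (- c / ((1 - c) * (1 - c + k * c)))"
    unfolding k_def by (rule matrix_inv_equi_mat) (use assms eq in \<open>simp_all add: k_def\<close>)
  then show ?thesis
    by (simp only: equicorr_eq_equi_mat eq)
qed

lemma matrix_inv_equicorr_mult:
  assumes "1 - c \<noteq> 0" "1 + (real CARD('n) - 1) * c \<noteq> 0"
  shows "matrix_inv (equicorr c :: real^'n^'n) ** equicorr c = mat 1"
proof -
  have "1 - c + real CARD('n) * c \<noteq> 0"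
    using assms(2) by (simp add: algebra_simps)
  then show ?thesis
    using equi_mat_inverse_mult[of "1 - c" c, where 'n='n] matrix_inv_equi_mat[of "1 - c" c, where 'n='n] assms(1)
    by (simp add: equicorr_eq_equi_mat)
qed

lemma equicorr_inverse_row_sum:
  fixes c k :: real
  assumes "1 - c \<noteq> 0" "1 + (k - 1) * c \<noteq> 0"
  shows "1 / (1 - c) + - c / ((1 - c) * (1 + (k - 1) * c)) * k = 1 / (1 + (k - 1) * c)"
proof -
  define a where "a = 1 - c"
  define D where "D = 1 + (k - 1) * c"
  have nz: "a \<noteq> 0" "D \<noteq> 0" and rel: "D - k * c = a"
    using assms by (simp_all add: a_def D_def algebra_simps)
  have "1 / a + - c / (a * D) * k = (D - k * c) / (a * D)"
    using nz by (simp add: field_simps)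
  also have "\<dots> = 1 / D"
    using nz by (simp add: rel)
  finally show ?thesis
    by (simp only: a_def D_def)
qed

lemma matrix_inv_equicorr_mult_vec_one:
  defines "k \<equiv> real CARD('n)"
  assumes "1 - c \<noteq> 0" "1 + (k - 1) * c \<noteq> 0"
  shows "matrix_inv (equicorr c :: real^'n^'n) *v (\<chi> i. 1) = (\<chi> i. 1 / (1 + (k - 1) * c))"
proof -
  have "matrix_inv (equicorr c :: real^'n^'n) *v (\<chi> i. 1)
      = (\<chi> i. 1 / (1 - c) + - c / ((1 - c) * (1 + (k - 1) * c)) * k)"
    using assms(2,3) by (simp add: matrix_inv_equicorr equi_mat_mult_vec k_def)
  then show ?thesis
    by (simp only: equicorr_inverse_row_sum[OF assms(2,3)])
qed

(* When k is the size of the active block, the first factor is the Schur complement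
   C_I - C_IA C_A\<inverse> C_AI of the equicorrelation matrix (see PI_eq_mvn_prob). *)
lemma equi_mat_schur_complement_mult_inverse:
  fixes c k :: real
  defines "m \<equiv> real CARD('n)"
  assumes "1 - c \<noteq> 0" "1 + (k - 1) * c \<noteq> 0" "1 + (k + m - 1) * c \<noteq> 0"
  shows "(equi_mat (1 - c) (c * (1 - c) / (1 + (k - 1) * c)) :: real^'n^'n)
      ** equi_mat (1 / (1 - c)) (- c / ((1 - c) * (1 + (k + m - 1) * c))) = mat 1"
proof -
  define a where "a = 1 - c"
  define D where "D = 1 + (k - 1) * c"
  define E where "E = 1 + (k + m - 1) * c"
  have nz: "a \<noteq> 0" "D \<noteq> 0" "E \<noteq> 0" and rel: "E - D = m * c"
    using assms(2-4) by (simp_all add: a_def D_def E_def algebra_simps)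
  have "a * (- c / (a * E)) + c * a / D * (1 / a) + m * (c * a / D) * (- c / (a * E))
      = (c * (E - D) - m * c * c) / (D * E)"
    using nz by (simp add: field_simps)
  also have "\<dots> = 0"
    by (simp add: rel)
  finally have "equi_mat (a * (1 / a)) (a * (- c / (a * E)) + c * a / D * (1 / a) + m * (c * a / D) * (- c / (a * E)))
      = (mat 1 :: real^'n^'n)"
    using nz(1) by (simp add: equi_mat_1_0)
  then show ?thesis
    unfolding equi_mat_mult m_def[symmetric] by (simp only: a_def D_def E_def)
qed

section \<open>Gaussian integrals with precision matrix a I + b J\<close>

definition dev_sq :: "real \<Rightarrow> real^'n \<Rightarrow> real" where
  "dev_sq m x = (\<Sum>i\<in>UNIV. (x $ i - m)^2)"

definition dev_sum :: "real \<Rightarrow> real^'n \<Rightarrow> real" where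
  "dev_sum m x = (\<Sum>i\<in>UNIV. x $ i - m)"

definition equi_quad :: "real \<Rightarrow> real \<Rightarrow> real \<Rightarrow> real^'n \<Rightarrow> real" where
  "equi_quad a b m x = a * dev_sq m x + b * (dev_sum m x)^2"

definition equi_quad_deriv :: "real \<Rightarrow> real \<Rightarrow> real \<Rightarrow> real \<Rightarrow> real \<Rightarrow> real \<Rightarrow> real^'n \<Rightarrow> real" where
  "equi_quad_deriv a b m a' b' m' x =
     a' * dev_sq m x + b' * (dev_sum m x)^2 - 2 * m' * (a + real CARD('n) * b) * dev_sum m x"

definition equi_gauss_integral :: "(real^'n) set \<Rightarrow> real \<Rightarrow> real \<Rightarrow> real \<Rightarrow> real" where
  "equi_gauss_integral S a b m = (\<integral>x. indicator S x * exp (- equi_quad a b m x / 2) \<partial>lborel)"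

lemma mvn_prob_equi_mat:
  fixes Sig :: "real^'n^'n"
  assumes inv: "Sig ** equi_mat a b = mat 1"
  shows "mvn_prob (\<chi> i. m) Sig S =
    equi_gauss_integral S a b m * sqrt (det (equi_mat a b :: real^'n^'n)) / sqrt ((2 * pi) ^ CARD('n))"
proof -
  have "matrix_inv Sig = equi_mat a b"
    using inv matrix_left_right_inverse by (blast intro: matrix_inv_eqI)
  then have quad: "(x - (\<chi> i. m)) \<bullet> (matrix_inv Sig *v (x - (\<chi> i. m))) = equi_quad a b m x" for x
    by (simp add: inner_equi_mat_mult_vec equi_quad_def dev_sq_def dev_sum_def)
  have "det Sig * det (equi_mat a b :: real^'n^'n) = 1"
    using det_mul[of Sig "equi_mat a b"] inv by simp
  then have det: "det (equi_mat a b :: real^'n^'n) \<noteq> 0" "det Sig = 1 / det (equi_mat a b :: real^'n^'n)"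
    by (auto simp: eq_divide_eq)
  have "mvn_prob (\<chi> i. m) Sig S =
      (\<integral>x. indicator S x * exp (- equi_quad a b m x / 2) / sqrt ((2 * pi) ^ CARD('n) * det Sig) \<partial>lborel)"
    unfolding mvn_prob_def mvn_density_def quad by simp
  also have "\<dots> = equi_gauss_integral S a b m / sqrt ((2 * pi) ^ CARD('n) * det Sig)"
    unfolding equi_gauss_integral_def by (rule integral_divide_zero)
  finally show ?thesis
    using det by (simp add: real_sqrt_mult real_sqrt_divide)
qed

lemma exp_equi_quad_has_real_derivative:
  fixes x :: "real^'n"
  assumes "(A has_real_derivative a') (at c)" "(B has_real_derivative b') (at c)"
    and "(m has_real_derivative m') (at c)"
  shows "((\<lambda>c. exp (- equi_quad (A c) (B c) (m c) x / 2)) has_real_derivative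
     exp (- equi_quad (A c) (B c) (m c) x / 2) * (- equi_quad_deriv (A c) (B c) (m c) a' b' m' x / 2)) (at c)"
proof -
  define N where "N = real CARD('n)"
  define X1 where "X1 = (\<Sum>i\<in>UNIV. x $ i)"
  define X2 where "X2 = (\<Sum>i\<in>UNIV. (x $ i)^2)"
  have sq: "dev_sq \<mu> x = X2 - 2 * \<mu> * X1 + N * \<mu>^2" for \<mu>
    by (simp add: dev_sq_def X1_def X2_def N_def power2_diff sum.distrib sum_subtractf
        sum_distrib_left algebra_simps)
  have sm: "dev_sum \<mu> x = X1 - N * \<mu>" for \<mu>
    by (simp add: dev_sum_def X1_def N_def sum_subtractf)
  have "((\<lambda>c. A c * (X2 - 2 * m c * X1 + N * (m c)^2) + B c * (X1 - N * m c)^2) has_real_derivative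
      a' * (X2 - 2 * m c * X1 + N * (m c)^2) + b' * (X1 - N * m c)^2
        - 2 * m' * (A c + N * B c) * (X1 - N * m c)) (at c)"
    by (auto intro!: derivative_eq_intros assms simp: algebra_simps)
  from DERIV_chain2[OF DERIV_exp DERIV_cdivide[OF DERIV_minus[OF this]], of 2]
  show ?thesis
    by (simp add: equi_quad_def equi_quad_deriv_def sq sm N_def)
qed

lemma dev_sum_sq_le: "(dev_sum m x)^2 \<le> real CARD('n) * dev_sq m (x :: real^'n)"
  using sum_squared_le_sum_of_squares[of "\<lambda>i. x $ i - m" UNIV]
  by (simp add: dev_sum_def dev_sq_def mult.commute)

lemma half_dev_sq_le_equi_quad:
  fixes x :: "real^'n"
  assumes "1/2 \<le> a - real CARD('n) * \<bar>b\<bar>"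
  shows "dev_sq m x / 2 \<le> equi_quad a b m x"
proof -
  have q: "0 \<le> dev_sq m x"
    by (simp add: dev_sq_def sum_nonneg)
  have "- \<bar>b\<bar> * (real CARD('n) * dev_sq m x) \<le> - \<bar>b\<bar> * (dev_sum m x)^2"
    using mult_left_mono[OF dev_sum_sq_le[of m x], of "\<bar>b\<bar>"] by simp
  also have "\<dots> \<le> b * (dev_sum m x)^2"
    by (intro mult_right_mono) auto
  moreover have "1/2 * dev_sq m x \<le> (a - real CARD('n) * \<bar>b\<bar>) * dev_sq m x"
    using assms q by (rule mult_right_mono)
  ultimately show ?thesis
    by (simp add: equi_quad_def algebra_simps)
qed

definition gauss_majorant :: "real \<Rightarrow> real^'n \<Rightarrow> real" where
  "gauss_majorant K x = exp (real CARD('n) * K^2 / 8) * (\<Prod>i\<in>UNIV. exp (- ((x $ i)^2) / 16))"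

lemma gauss_majorant_pos: "0 < gauss_majorant K x"
  by (simp add: gauss_majorant_def prod_pos)

lemma exp_dev_sq_le_gauss_majorant:
  fixes x :: "real^'n"
  assumes "\<bar>m\<bar> \<le> K"
  shows "exp (- dev_sq m x / 8) \<le> gauss_majorant K x"
proof -
  have "(x $ i)^2 / 2 - K^2 \<le> (x $ i - m)^2" for i
  proof -
    have "m^2 \<le> K^2"
      using power_mono[OF assms, of 2] by simp
    moreover have "0 \<le> (x $ i - 2 * m)^2"
      by simp
    ultimately show ?thesis
      by (simp add: power2_eq_square algebra_simps)
  qed
  then have "(\<Sum>i\<in>UNIV. (x $ i)^2 / 2 - K^2) \<le> dev_sq m x"
    unfolding dev_sq_def by (intro sum_mono)
  then have "- dev_sq m x / 8 \<le> real CARD('n) * K^2 / 8 + (\<Sum>i\<in>UNIV. - ((x $ i)^2) / 16)"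
    by (simp add: sum_subtractf sum_divide_distrib[symmetric] sum_negf)
  then have "exp (- dev_sq m x / 8) \<le> exp (real CARD('n) * K^2 / 8 + (\<Sum>i\<in>UNIV. - ((x $ i)^2) / 16))"
    by simp
  also have "\<dots> = gauss_majorant K x"
    by (simp add: gauss_majorant_def exp_add exp_sum)
  finally show ?thesis .
qed

lemma integrable_gauss_majorant: "integrable lborel (gauss_majorant K :: real^'n \<Rightarrow> real)"
proof -
  have "(\<lambda>t::real. exp (- (t^2) / 16)) = (\<lambda>t. sqrt (2 * pi * (sqrt 8)^2) * normal_density 0 (sqrt 8) t)"
    by (auto simp: normal_density_def fun_eq_iff)
  then have "integrable lborel (\<lambda>t::real. exp (- (t^2) / 16))"
    by simp
  then show ?thesis
    unfolding gauss_majorant_def by (intro integrable_mult_right integral_lborel_prod_vec(1))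
qed

lemma abs_dev_sum_le:
  fixes x :: "real^'n"
  shows "\<bar>dev_sum m x\<bar> \<le> (1 + real CARD('n)) * (1 + dev_sq m x)"
proof -
  define s where "s = dev_sum m x"
  have "\<bar>s\<bar> \<le> 1 + s^2"
  proof (cases "\<bar>s\<bar> \<le> 1")
    case False
    then have "\<bar>s\<bar> * 1 \<le> \<bar>s\<bar> * \<bar>s\<bar>"
      by (intro mult_left_mono) auto
    then show ?thesis
      by (simp add: power2_eq_square abs_mult_self_eq)
  qed (use zero_le_power2[of s] in linarith)
  also have "\<dots> \<le> 1 + real CARD('n) * dev_sq m x"
    using dev_sum_sq_le[of m x] by (simp add: s_def)
  also have "\<dots> \<le> (1 + real CARD('n)) * (1 + dev_sq m x)"
    by (simp add: algebra_simps dev_sq_def sum_nonneg)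
  finally show ?thesis
    unfolding s_def .
qed

lemma abs_equi_quad_deriv_le:
  fixes x :: "real^'n"
  defines "N \<equiv> real CARD('n)"
  assumes K: "\<bar>a\<bar> \<le> K" "\<bar>b\<bar> \<le> K" "\<bar>a'\<bar> \<le> K" "\<bar>b'\<bar> \<le> K" "\<bar>m'\<bar> \<le> K"
  shows "\<bar>equi_quad_deriv a b m a' b' m' x\<bar> \<le> (1 + N) * (K + 2 * K^2 * (1 + N)) * (1 + dev_sq m x)"
proof -
  define q where "q = dev_sq m x"
  define s where "s = dev_sum m x"
  have q0: "0 \<le> q"
    by (simp add: q_def dev_sq_def sum_nonneg)
  have K0: "0 \<le> K" "0 \<le> N"
    using K(1) by (auto simp: N_def)
  have "\<bar>a' * q\<bar> \<le> K * q"
    using K(3) q0 by (simp add: abs_mult mult_right_mono)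
  moreover have "\<bar>b' * s^2\<bar> \<le> K * (N * q)"
    using K(4) dev_sum_sq_le[of m x] K0 by (simp add: q_def s_def N_def abs_mult mult_mono)
  moreover have "\<bar>2 * m' * (a + N * b) * s\<bar> \<le> 2 * K * (K + N * K) * ((1 + N) * (1 + q))"
  proof -
    have "\<bar>a + N * b\<bar> \<le> \<bar>a\<bar> + N * \<bar>b\<bar>"
      using abs_triangle_ineq[of a "N * b"] K0 by (simp add: abs_mult)
    also have "\<dots> \<le> K + N * K"
      using K(1,2) K0 by (simp add: add_mono mult_left_mono)
    finally have "\<bar>m'\<bar> * \<bar>a + N * b\<bar> \<le> K * (K + N * K)"
      using K(5) K0 by (simp add: mult_mono)
    then have "\<bar>m'\<bar> * \<bar>a + N * b\<bar> * \<bar>s\<bar> \<le> K * (K + N * K) * ((1 + N) * (1 + q))"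
      using abs_dev_sum_le[of m x] K0 by (simp add: q_def s_def N_def mult_mono)
    then show ?thesis
      by (simp add: abs_mult)
  qed
  ultimately have "\<bar>equi_quad_deriv a b m a' b' m' x\<bar>
      \<le> K * q + K * (N * q) + 2 * K * (K + N * K) * ((1 + N) * (1 + q))"
    unfolding equi_quad_deriv_def q_def[symmetric] s_def[symmetric] N_def[symmetric] by linarith
  also have "\<dots> \<le> (1 + N) * (K + 2 * K^2 * (1 + N)) * (1 + q)"
    using K0 by (simp add: algebra_simps power2_eq_square)
  finally show ?thesis
    unfolding q_def .
qed

lemma exp_equi_quad_bounds:
  fixes x :: "real^'n" and K :: real
  defines "N \<equiv> real CARD('n)"
  defines "L \<equiv> (1 + N) * (K + 2 * K^2 * (1 + N))"
  assumes K: "\<bar>a\<bar> \<le> K" "\<bar>b\<bar> \<le> K" "\<bar>m\<bar> \<le> K" "\<bar>a'\<bar> \<le> K" "\<bar>b'\<bar> \<le> K" "\<bar>m'\<bar> \<le> K"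
    and pos: "1/2 \<le> a - N * \<bar>b\<bar>"
  shows "exp (- equi_quad a b m x / 2) \<le> gauss_majorant K x"
    and "\<bar>exp (- equi_quad a b m x / 2) * (- equi_quad_deriv a b m a' b' m' x / 2)\<bar>
       \<le> 4 * L * gauss_majorant K x"
proof -
  define q where "q = dev_sq m x"
  have q0: "0 \<le> q"
    by (simp add: q_def dev_sq_def sum_nonneg)
  have L0: "0 \<le> L"
    using K(1) by (simp add: L_def N_def)
  have exp_Q: "exp (- equi_quad a b m x / 2) \<le> exp (- q / 4)"
    using half_dev_sq_le_equi_quad[OF pos[unfolded N_def]] by (simp add: q_def)
  have W: "exp (- q / 8) \<le> gauss_majorant K x"
    unfolding q_def by (rule exp_dev_sq_le_gauss_majorant[OF K(3)])
  have "exp (- q / 4) \<le> exp (- q / 8)"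
    using q0 by simp
  then show "exp (- equi_quad a b m x / 2) \<le> gauss_majorant K x"
    using exp_Q W by linarith
  have "\<bar>exp (- equi_quad a b m x / 2) * (- equi_quad_deriv a b m a' b' m' x / 2)\<bar>
      = exp (- equi_quad a b m x / 2) * \<bar>equi_quad_deriv a b m a' b' m' x\<bar> / 2"
    by (simp add: abs_mult)
  also have "\<dots> \<le> exp (- q / 4) * (L * (1 + q)) / 2"
    using exp_Q abs_equi_quad_deriv_le[OF K(1,2,4,5,6), of m x]
    by (intro divide_right_mono mult_mono) (auto simp: L_def N_def q_def)
  also have "\<dots> \<le> exp (- q / 4) * (L * (8 * exp (q / 8))) / 2"
  proof -
    have "1 + q \<le> 8 * exp (q / 8)"
      using exp_ge_add_one_self[of "q / 8"] by linarith
    then show ?thesis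
      using L0 by (intro divide_right_mono mult_left_mono) auto
  qed
  also have "\<dots> = 4 * L * exp (- q / 8)"
    by (simp add: mult_exp_exp)
  also have "\<dots> \<le> 4 * L * gauss_majorant K x"
    using W L0 by (intro mult_left_mono) auto
  finally show "\<bar>exp (- equi_quad a b m x / 2) * (- equi_quad_deriv a b m a' b' m' x / 2)\<bar>
       \<le> 4 * L * gauss_majorant K x" .
qed

lemma equi_gauss_integral_has_real_derivative_bounded:
  fixes A B m A' B' m' :: "real \<Rightarrow> real" and S :: "(real^'n) set"
  assumes S: "S \<in> sets borel" and "0 < d"
    and deriv: "\<And>c. c \<in> {-d<..<d} \<Longrightarrow>
      (A has_real_derivative A' c) (at c) \<and> (B has_real_derivative B' c) (at c) \<and> (m has_real_derivative m' c) (at c)"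
    and bounded: "\<And>c. c \<in> {-d<..<d} \<Longrightarrow>
      \<bar>A c\<bar> \<le> K \<and> \<bar>B c\<bar> \<le> K \<and> \<bar>m c\<bar> \<le> K \<and> \<bar>A' c\<bar> \<le> K \<and> \<bar>B' c\<bar> \<le> K \<and> \<bar>m' c\<bar> \<le> K"
    and pos: "\<And>c. c \<in> {-d<..<d} \<Longrightarrow> 1/2 \<le> A c - real CARD('n) * \<bar>B c\<bar>"
  shows "((\<lambda>c. equi_gauss_integral S (A c) (B c) (m c)) has_real_derivative
     (\<integral>x. indicator S x * (exp (- equi_quad (A 0) (B 0) (m 0) x / 2) *
        (- equi_quad_deriv (A 0) (B 0) (m 0) (A' 0) (B' 0) (m' 0) x / 2)) \<partial>lborel)) (at 0)"
  unfolding equi_gauss_integral_def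
proof (rule has_real_derivative_integral_dominated[where I="{-d<..<d}"])
  let ?W = "\<lambda>x. 4 * ((1 + real CARD('n)) * (K + 2 * K^2 * (1 + real CARD('n)))) * gauss_majorant K x"
  show "((\<lambda>c. indicator S x * exp (- equi_quad (A c) (B c) (m c) x / 2)) has_real_derivative
      indicator S x * (exp (- equi_quad (A c) (B c) (m c) x / 2) *
        (- equi_quad_deriv (A c) (B c) (m c) (A' c) (B' c) (m' c) x / 2))) (at c)"
    if "c \<in> {-d<..<d}" for c x
    using deriv[OF that] by (intro DERIV_cmult exp_equi_quad_has_real_derivative) auto
  show "integrable lborel (\<lambda>x. indicator S x * exp (- equi_quad (A c) (B c) (m c) x / 2))"
    if "c \<in> {-d<..<d}" for c
  proof (rule Bochner_Integration.integrable_bound[OF integrable_gauss_majorant[of K]])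
    show "AE x in lborel. norm (indicator S x * exp (- equi_quad (A c) (B c) (m c) x / 2)) \<le> norm (gauss_majorant K x)"
    proof (intro AE_I2)
      fix x :: "real^'n"
      have "norm (indicator S x * exp (- equi_quad (A c) (B c) (m c) x / 2)) \<le> gauss_majorant K x"
        using exp_equi_quad_bounds(1)[of "A c" K "B c" "m c" "A' c" "B' c" "m' c" x] bounded[OF that] pos[OF that]
        using gauss_majorant_pos[of K x] by (auto simp: indicator_def)
      then show "norm (indicator S x * exp (- equi_quad (A c) (B c) (m c) x / 2)) \<le> norm (gauss_majorant K x)"
        by simp
    qed
  qed (use S in \<open>simp add: equi_quad_def dev_sq_def dev_sum_def\<close>)
  show "integrable lborel ?W"
    by (intro integrable_mult_right integrable_gauss_majorant)
  show "\<bar>indicator S x * (exp (- equi_quad (A c) (B c) (m c) x / 2) *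
      (- equi_quad_deriv (A c) (B c) (m c) (A' c) (B' c) (m' c) x / 2))\<bar> \<le> ?W x"
    if "c \<in> {-d<..<d}" for c x
  proof -
    have "\<bar>exp (- equi_quad (A c) (B c) (m c) x / 2) *
        (- equi_quad_deriv (A c) (B c) (m c) (A' c) (B' c) (m' c) x / 2)\<bar> \<le> ?W x"
      by (rule exp_equi_quad_bounds(2)) (use bounded[OF that] pos[OF that] in auto)
    then show ?thesis
      by (simp add: indicator_def)
  qed
qed (use S \<open>0 < d\<close> in \<open>simp_all add: equi_quad_def equi_quad_deriv_def dev_sq_def dev_sum_def\<close>)

lemma equi_gauss_integral_has_real_derivative:
  fixes A B m A' B' m' :: "real \<Rightarrow> real" and S :: "(real^'n) set"
  assumes S: "S \<in> sets borel" and "0 < d"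
    and deriv: "\<And>c. c \<in> {-d<..<d} \<Longrightarrow>
      (A has_real_derivative A' c) (at c) \<and> (B has_real_derivative B' c) (at c) \<and> (m has_real_derivative m' c) (at c)"
    and cont: "isCont A' 0" "isCont B' 0" "isCont m' 0"
    and A0: "A 0 = 1" and B0: "B 0 = 0"
  shows "((\<lambda>c. equi_gauss_integral S (A c) (B c) (m c)) has_real_derivative
     (\<integral>x. indicator S x * (exp (- equi_quad 1 0 (m 0) x / 2) *
        (- equi_quad_deriv 1 0 (m 0) (A' 0) (B' 0) (m' 0) x / 2)) \<partial>lborel)) (at 0)"
proof -
  define N where "N = real CARD('n)"
  define e where "e = 1 / (4 * (N + 1))"
  define K where "K = 2 + \<bar>m 0\<bar> + \<bar>A' 0\<bar> + \<bar>B' 0\<bar> + \<bar>m' 0\<bar>"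
  have N0: "0 \<le> N"
    by (simp add: N_def)
  have e: "0 < e" "e \<le> 1/4" "N * e \<le> 1/4"
    using N0 by (auto simp: e_def field_simps)
  have "isCont A 0" "isCont B 0" "isCont m 0"
    using deriv[of 0] \<open>0 < d\<close> by (auto intro: DERIV_isCont)
  then have "\<forall>\<^sub>F c in nhds 0. c \<in> {-d<..<d} \<and> dist (A c) (A 0) < e \<and> dist (B c) (B 0) < e \<and>
      dist (m c) (m 0) < 1 \<and> dist (A' c) (A' 0) < 1 \<and> dist (B' c) (B' 0) < 1 \<and> dist (m' c) (m' 0) < 1"
    using cont e(1) \<open>0 < d\<close>
    by (intro eventually_conj eventually_nhds_in_open tendstoD)
      (auto simp: isCont_def tendsto_at_iff_tendsto_nhds)
  then obtain r where r: "0 < r" and near: "\<And>c. dist c 0 < r \<Longrightarrow> c \<in> {-d<..<d} \<and>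
      \<bar>A c - 1\<bar> < e \<and> \<bar>B c\<bar> < e \<and> \<bar>m c - m 0\<bar> < 1 \<and>
      \<bar>A' c - A' 0\<bar> < 1 \<and> \<bar>B' c - B' 0\<bar> < 1 \<and> \<bar>m' c - m' 0\<bar> < 1"
    unfolding eventually_nhds_metric by (auto simp: dist_real_def A0 B0)
  have "((\<lambda>c. equi_gauss_integral S (A c) (B c) (m c)) has_real_derivative
     (\<integral>x. indicator S x * (exp (- equi_quad (A 0) (B 0) (m 0) x / 2) *
        (- equi_quad_deriv (A 0) (B 0) (m 0) (A' 0) (B' 0) (m' 0) x / 2)) \<partial>lborel)) (at 0)"
  proof (rule equi_gauss_integral_has_real_derivative_bounded[OF S r])
    fix c :: real
    assume "c \<in> {-r<..<r}"
    then have c: "c \<in> {-d<..<d}" "\<bar>A c - 1\<bar> < e" "\<bar>B c\<bar> < e" "\<bar>m c - m 0\<bar> < 1"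
      "\<bar>A' c - A' 0\<bar> < 1" "\<bar>B' c - B' 0\<bar> < 1" "\<bar>m' c - m' 0\<bar> < 1"
      using near[of c] by (auto simp: dist_real_def)
    show "(A has_real_derivative A' c) (at c) \<and> (B has_real_derivative B' c) (at c) \<and>
        (m has_real_derivative m' c) (at c)"
      by (rule deriv[OF c(1)])
    show "\<bar>A c\<bar> \<le> K \<and> \<bar>B c\<bar> \<le> K \<and> \<bar>m c\<bar> \<le> K \<and> \<bar>A' c\<bar> \<le> K \<and> \<bar>B' c\<bar> \<le> K \<and> \<bar>m' c\<bar> \<le> K"
      using c e by (auto simp: K_def abs_le_iff abs_less_iff)
    have "N * \<bar>B c\<bar> \<le> N * e"
      using c(3) N0 by (intro mult_left_mono) auto
    moreover have "1 - e < A c"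
      using c(2) by (simp add: abs_less_iff)
    ultimately show "1/2 \<le> A c - real CARD('n) * \<bar>B c\<bar>"
      using e unfolding N_def by linarith
  qed
  then show ?thesis
    by (simp add: A0 B0)
qed

definition trunc_gauss :: "real set \<Rightarrow> real \<Rightarrow> real \<Rightarrow> real" where
  "trunc_gauss T m t = indicator T t * exp (- ((t - m)^2) / 2)"

lemma integrable_trunc_gauss:
  assumes "T \<in> sets borel"
  shows "integrable lborel (trunc_gauss T m)"
    and "integrable lborel (\<lambda>t. trunc_gauss T m t * (t - m))"
proof -
  have T: "T \<in> sets lborel"
    using assms by simp
  have "(\<lambda>t. exp (- ((t - m)^2) / 2)) = (\<lambda>t. sqrt (2 * pi) * normal_density m 1 t)"
    by (auto simp: normal_density_def fun_eq_iff)
  then have "integrable lborel (\<lambda>t. exp (- ((t - m)^2) / 2))"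
    by (simp add: integrable_normal_density)
  from integrable_mult_indicator[OF T this] show "integrable lborel (trunc_gauss T m)"
    by (simp add: trunc_gauss_def[abs_def])
  have "(\<lambda>t. exp (- ((t - m)^2) / 2) * (t - m)) = (\<lambda>t. sqrt (2 * pi) * (normal_density m 1 t * (t - m)))"
    by (auto simp: normal_density_def fun_eq_iff)
  then have "integrable lborel (\<lambda>t. exp (- ((t - m)^2) / 2) * (t - m))"
    using integrable_normal_moment[of 1 m 1] by simp
  from integrable_mult_indicator[OF T this] show "integrable lborel (\<lambda>t. trunc_gauss T m t * (t - m))"
    by (simp add: trunc_gauss_def mult.assoc)
qed

lemma prod_trunc_gauss:
  fixes x :: "real^'n"
  shows "(\<Prod>l\<in>UNIV. if l \<in> J then trunc_gauss T m (x $ l) * (x $ l - m) else trunc_gauss T m (x $ l))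
    = indicator {x. \<forall>i. x $ i \<in> T} x * exp (- equi_quad 1 0 m x / 2) * (\<Prod>l\<in>J. x $ l - m)"
proof -
  have "(\<Prod>l\<in>UNIV. if l \<in> J then trunc_gauss T m (x $ l) * (x $ l - m) else trunc_gauss T m (x $ l))
      = (\<Prod>l\<in>UNIV. indicator T (x $ l)) * (\<Prod>l\<in>UNIV. exp (- ((x $ l - m)^2) / 2)) *
        (\<Prod>l\<in>UNIV. if l \<in> J then x $ l - m else 1)"
    by (simp add: trunc_gauss_def if_distrib[of "\<lambda>y. _ * y"] prod.distrib[symmetric] cong: if_cong)
  also have "(\<Prod>l\<in>UNIV. indicator T (x $ l) :: real) = indicator {x. \<forall>i. x $ i \<in> T} x"
    by (auto simp: indicator_def prod_zero)
  also have "(\<Prod>l\<in>UNIV. exp (- ((x $ l - m)^2) / 2)) = exp (- equi_quad 1 0 m x / 2)"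
    by (simp add: equi_quad_def dev_sq_def exp_sum[symmetric] sum_negf[symmetric] sum_divide_distrib)
  also have "(\<Prod>l\<in>UNIV. if l \<in> J then x $ l - m else 1) = (\<Prod>l\<in>J. x $ l - m)"
    by (simp add: prod.If_cases)
  finally show ?thesis .
qed

lemma
  fixes J :: "'n::finite set"
  assumes "T \<in> sets borel"
  shows integrable_prod_set_moment:
      "integrable lborel (\<lambda>x::real^'n.
         indicator {x. \<forall>i. x $ i \<in> T} x * exp (- equi_quad 1 0 m x / 2) * (\<Prod>l\<in>J. x $ l - m))"
    and integral_prod_set_moment:
      "(\<integral>x. indicator {x. \<forall>i. x $ i \<in> T} x * exp (- equi_quad 1 0 m x / 2) * (\<Prod>l\<in>J. x $ l - m)
          \<partial>(lborel :: (real^'n) measure))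
       = (\<integral>t. trunc_gauss T m t * (t - m) \<partial>lborel) ^ card J * (\<integral>t. trunc_gauss T m t \<partial>lborel) ^ (CARD('n) - card J)"
  using integrable_lborel_prod_vec_if[OF integrable_trunc_gauss(2,1)[OF assms, of m], of J]
    integral_lborel_prod_vec_if[OF integrable_trunc_gauss(2,1)[OF assms, of m], of J]
  by (simp_all add: prod_trunc_gauss)

lemma equi_gauss_integral_prod_set:
  assumes "T \<in> sets borel"
  shows "equi_gauss_integral {x::real^'n. \<forall>i. x $ i \<in> T} 1 0 m = (\<integral>t. trunc_gauss T m t \<partial>lborel) ^ CARD('n)"
  using integral_prod_set_moment[OF assms, of m "{}"] by (simp add: equi_gauss_integral_def)

lemma equi_quad_deriv_at_identity:
  fixes x :: "real^'n"
  shows "- equi_quad_deriv 1 0 m (- b') b' m' x / 2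
    = m' * (\<Sum>i\<in>UNIV. \<Prod>l\<in>{i}. x $ l - m) - b' / 2 * (\<Sum>i\<in>UNIV. \<Sum>j\<in>UNIV - {i}. \<Prod>l\<in>{i, j}. x $ l - m)"
proof -
  have "(\<Sum>j\<in>UNIV. (x $ i - m) * (x $ j - m)) = (x $ i - m) * (x $ i - m) + (\<Sum>j\<in>UNIV - {i}. (x $ i - m) * (x $ j - m))"
    for i
    by (rule sum.remove) auto
  then have "(dev_sum m x)^2 - dev_sq m x = (\<Sum>i\<in>UNIV. \<Sum>j\<in>UNIV - {i}. (x $ i - m) * (x $ j - m))"
    by (simp add: dev_sum_def dev_sq_def power2_eq_square sum_product sum.distrib)
  also have "\<dots> = (\<Sum>i\<in>UNIV. \<Sum>j\<in>UNIV - {i}. \<Prod>l\<in>{i, j}. x $ l - m)"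
    by (intro sum.cong refl) simp
  finally have sq: "(dev_sum m x)^2 - dev_sq m x = (\<Sum>i\<in>UNIV. \<Sum>j\<in>UNIV - {i}. \<Prod>l\<in>{i, j}. x $ l - m)" .
  have "- equi_quad_deriv 1 0 m (- b') b' m' x / 2 = m' * dev_sum m x - b' / 2 * ((dev_sum m x)^2 - dev_sq m x)"
    by (simp add: equi_quad_deriv_def field_simps)
  also have "\<dots> = m' * (\<Sum>i\<in>UNIV. \<Prod>l\<in>{i}. x $ l - m) - b' / 2 * (\<Sum>i\<in>UNIV. \<Sum>j\<in>UNIV - {i}. \<Prod>l\<in>{i, j}. x $ l - m)"
    unfolding sq by (simp add: dev_sum_def)
  finally show ?thesis .
qed

lemma integral_prod_set_equi_quad_deriv:
  fixes T :: "real set" and m :: real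
  defines "N \<equiv> real CARD('n)"
    and "I0 \<equiv> \<integral>t. trunc_gauss T m t \<partial>lborel"
    and "I1 \<equiv> \<integral>t. trunc_gauss T m t * (t - m) \<partial>lborel"
  assumes T: "T \<in> sets borel"
  shows "(\<integral>x. indicator {x. \<forall>i. x $ i \<in> T} x * (exp (- equi_quad 1 0 m x / 2) *
      (- equi_quad_deriv 1 0 m (- b') b' m' x / 2)) \<partial>(lborel :: (real^'n) measure))
    = m' * N * I1 * I0 ^ (CARD('n) - 1) - b' / 2 * N * (N - 1) * I1^2 * I0 ^ (CARD('n) - 2)"
proof -
  define F where "F J x = indicator {x. \<forall>i. x $ i \<in> T} x * exp (- equi_quad 1 0 m x / 2) * (\<Prod>l\<in>J. x $ l - m)"
    for J and x :: "real^'n"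
  have pointwise: "indicator {x. \<forall>i. x $ i \<in> T} x * (exp (- equi_quad 1 0 m x / 2) *
        (- equi_quad_deriv 1 0 m (- b') b' m' x / 2))
      = m' * (\<Sum>i\<in>UNIV. F {i} x) - b' / 2 * (\<Sum>i\<in>UNIV. \<Sum>j\<in>UNIV - {i}. F {i, j} x)" for x
    unfolding equi_quad_deriv_at_identity F_def by (simp only: right_diff_distrib sum_distrib_left ac_simps)
  have integral_F: "(\<integral>x. F J x \<partial>lborel) = I1 ^ card J * I0 ^ (CARD('n) - card J)" for J
    unfolding F_def I0_def I1_def by (rule integral_prod_set_moment[OF T])
  have integrable_F: "integrable lborel (F J)" for J
    unfolding F_def by (rule integrable_prod_set_moment[OF T])
  have pairs: "(\<Sum>j\<in>UNIV - {i}. \<integral>x. F {i, j} x \<partial>lborel) = (N - 1) * (I1^2 * I0 ^ (CARD('n) - 2))" for i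
  proof -
    have "(\<Sum>j\<in>UNIV - {i}. \<integral>x. F {i, j} x \<partial>lborel) = (\<Sum>j\<in>UNIV - {i}. I1^2 * I0 ^ (CARD('n) - 2))"
      by (intro sum.cong refl) (auto simp: integral_F power2_eq_square numeral_2_eq_2)
    then show ?thesis
      by (simp add: card_Diff_subset N_def of_nat_diff)
  qed
  have "(\<integral>x. indicator {x. \<forall>i. x $ i \<in> T} x * (exp (- equi_quad 1 0 m x / 2) *
      (- equi_quad_deriv 1 0 m (- b') b' m' x / 2)) \<partial>(lborel :: (real^'n) measure))
    = (\<integral>x. m' * (\<Sum>i\<in>UNIV. F {i} x) - b' / 2 * (\<Sum>i\<in>UNIV. \<Sum>j\<in>UNIV - {i}. F {i, j} x) \<partial>lborel)"
    by (intro Bochner_Integration.integral_cong refl pointwise)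
  also have "\<dots> = m' * (\<Sum>i\<in>UNIV. \<integral>x. F {i} x \<partial>lborel)
      - b' / 2 * (\<Sum>i\<in>UNIV. \<Sum>j\<in>UNIV - {i}. \<integral>x. F {i, j} x \<partial>lborel)"
    using integrable_F by (simp add: integral_sum integrable_sum)
  also have "\<dots> = m' * N * I1 * I0 ^ (CARD('n) - 1) - b' / 2 * N * (N - 1) * I1^2 * I0 ^ (CARD('n) - 2)"
    by (simp add: integral_F pairs N_def power2_eq_square numeral_2_eq_2)
  finally show ?thesis .
qed

(* The precision matrix A c I + B c J is the identity at c = 0, and A' 0 + B' 0 = 0 makes its
   diagonal, hence its determinant, stationary there. *)
lemma mvn_prob_prod_set_has_real_derivative:
  fixes Sig :: "real \<Rightarrow> real^'n^'n" and A B m A' B' m' :: "real \<Rightarrow> real" and T :: "real set"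
  defines "N \<equiv> real CARD('n)"
    and "I0 \<equiv> \<integral>t. trunc_gauss T (m 0) t \<partial>lborel"
    and "I1 \<equiv> \<integral>t. trunc_gauss T (m 0) t * (t - m 0) \<partial>lborel"
  assumes T: "T \<in> sets borel" and d: "0 < d"
    and inv: "\<And>c. c \<in> {-d<..<d} \<Longrightarrow> Sig c ** equi_mat (A c) (B c) = mat 1"
    and deriv: "\<And>c. c \<in> {-d<..<d} \<Longrightarrow>
      (A has_real_derivative A' c) (at c) \<and> (B has_real_derivative B' c) (at c) \<and> (m has_real_derivative m' c) (at c)"
    and cont: "isCont A' 0" "isCont B' 0" "isCont m' 0"
    and init: "A 0 = 1" "B 0 = 0" "A' 0 + B' 0 = 0"
  shows "((\<lambda>c. mvn_prob (\<chi> i. m c) (Sig c) {x. \<forall>i. x $ i \<in> T}) has_real_derivative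
      (m' 0 * N * I1 * I0 ^ (CARD('n) - 1) - B' 0 / 2 * N * (N - 1) * I1^2 * I0 ^ (CARD('n) - 2))
        / sqrt ((2 * pi) ^ CARD('n))) (at 0)" (is "(_ has_real_derivative ?DF / _) _")
    and "mvn_prob (\<chi> i. m 0) (Sig 0) {x. \<forall>i. x $ i \<in> T} = I0 ^ CARD('n) / sqrt ((2 * pi) ^ CARD('n))"
proof -
  define S where "S = {x::real^'n. \<forall>i. x $ i \<in> T}"
  define F where "F c = equi_gauss_integral S (A c) (B c) (m c)" for c
  define R where "R c = sqrt (det (equi_mat (A c) (B c) :: real^'n^'n))" for c
  have S: "S \<in> sets borel"
    unfolding S_def by (rule prod_set_in_borel[OF T])
  have d0: "0 \<in> {-d<..<d}"
    using d by simp
  have mvn: "mvn_prob (\<chi> i. m c) (Sig c) S = F c * R c / sqrt ((2 * pi) ^ CARD('n))" if "c \<in> {-d<..<d}" for c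
    unfolding F_def R_def by (rule mvn_prob_equi_mat[OF inv[OF that]])
  have R0: "R 0 = 1"
    by (simp add: R_def init equi_mat_1_0)
  have dR: "(R has_real_derivative 0) (at 0)"
    unfolding R_def using deriv[OF d0] init by (intro sqrt_det_equi_mat_has_real_derivative) auto
  have dF: "(F has_real_derivative ?DF) (at 0)"
  proof -
    have "A' 0 = - B' 0"
      using init(3) by simp
    with equi_gauss_integral_has_real_derivative[OF S d deriv cont init(1,2)] show ?thesis
      unfolding F_def N_def I0_def I1_def S_def by (simp only: integral_prod_set_equi_quad_deriv[OF T])
  qed
  from DERIV_cdivide[OF DERIV_mult[OF dF dR], of "sqrt ((2 * pi) ^ CARD('n))"]
  have "((\<lambda>c. F c * R c / sqrt ((2 * pi) ^ CARD('n))) has_real_derivative ?DF / sqrt ((2 * pi) ^ CARD('n))) (at 0)"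
    by (simp add: R0)
  then show "((\<lambda>c. mvn_prob (\<chi> i. m c) (Sig c) {x. \<forall>i. x $ i \<in> T}) has_real_derivative
      ?DF / sqrt ((2 * pi) ^ CARD('n))) (at 0)"
    unfolding S_def[symmetric] by (rule has_field_derivative_transform_within_open[OF _ _ d0]) (simp_all add: mvn)
  show "mvn_prob (\<chi> i. m 0) (Sig 0) {x. \<forall>i. x $ i \<in> T} = I0 ^ CARD('n) / sqrt ((2 * pi) ^ CARD('n))"
    using mvn[OF d0] equi_gauss_integral_prod_set[OF T, of "m 0", where 'n='n]
    by (simp add: F_def S_def I0_def init R0)
qed

section \<open>One-dimensional truncated Gaussian integrals\<close>

lemma integral_indicator_mult_pos:
  fixes f :: "real \<Rightarrow> real"
  assumes int: "integrable lborel (\<lambda>t. indicator S t * f t)"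
    and pos: "\<And>t. t \<in> S \<Longrightarrow> 0 < f t" and sub: "{a..b} \<subseteq> S" and "a < b"
  shows "0 < (\<integral>t. indicator S t * f t \<partial>lborel)"
proof -
  have nonneg: "AE t in lborel. 0 \<le> indicator S t * f t"
    using pos by (intro AE_I2) (auto simp: indicator_def less_imp_le)
  have "(\<integral>t. indicator S t * f t \<partial>lborel) \<noteq> 0"
  proof
    assume "(\<integral>t. indicator S t * f t \<partial>lborel) = 0"
    then have "AE t in lborel. indicator S t * f t = 0"
      using integral_nonneg_eq_0_iff_AE[OF int nonneg] by simp
    then have "AE t in lborel. t \<notin> {a..b}"
      by eventually_elim (use pos sub in \<open>fastforce simp: indicator_def\<close>)
    then have "{a..b} \<in> null_sets lborel"
      using AE_iff_null_sets[of "{a..b}" lborel] by simp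
    then have "emeasure lborel {a..b} = 0"
      by (rule null_setsD1)
    then show False
      using \<open>a < b\<close> by simp
  qed
  moreover have "0 \<le> (\<integral>t. indicator S t * f t \<partial>lborel)"
    using nonneg by (rule integral_nonneg_AE)
  ultimately show ?thesis
    by simp
qed

lemma std_normal_cdf_pos: "0 < std_normal_cdf x"
  unfolding std_normal_cdf_def
proof (rule integral_indicator_mult_pos[of _ _ "x - 1" x])
  show "integrable lborel (\<lambda>t. indicator {..x} t * std_normal_density t)"
    using integrable_mult_indicator[of "{..x}" lborel std_normal_density] by simp
qed (auto simp: normal_density_pos)

lemma integral_trunc_gauss_symmetric_pos:
  assumes "0 < a"
  shows "0 < (\<integral>t. trunc_gauss {-a..a} m t \<partial>lborel)"
  unfolding trunc_gauss_def using assms integrable_trunc_gauss(1)[of "{-a..a}" m]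
  by (intro integral_indicator_mult_pos[of _ _ "-a" a]) (auto simp: trunc_gauss_def[abs_def])

lemma integral_trunc_gauss_halfline:
  "(\<integral>t. trunc_gauss {..<t0} mu t \<partial>lborel) = sqrt (2 * pi) * std_normal_cdf (t0 - mu)"
proof -
  have "(\<integral>t. trunc_gauss {..<t0} mu t \<partial>lborel) = (\<integral>s. trunc_gauss {..<t0} mu (mu + 1 * s) \<partial>lborel)"
    using lborel_integral_real_affine[of 1 "trunc_gauss {..<t0} mu" mu] by simp
  also have "\<dots> = (\<integral>s. sqrt (2 * pi) * (indicator {..t0 - mu} s * std_normal_density s) \<partial>lborel)"
    using AE_lborel_singleton[of "t0 - mu"]
    by (intro integral_cong_AE) (auto elim!: eventually_mono simp: trunc_gauss_def std_normal_density_def indicator_def)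
  also have "\<dots> = sqrt (2 * pi) * std_normal_cdf (t0 - mu)"
    unfolding std_normal_cdf_def by (rule integral_mult_right_zero)
  finally show ?thesis .
qed

lemma integral_trunc_gauss_moment_halfline:
  "(\<integral>t. trunc_gauss {..<t0} mu t * (t - mu) \<partial>lborel) = - sqrt (2 * pi) * std_normal_density (t0 - mu)"
proof -
  define f where "f t = exp (- ((t - mu)^2) / 2) * (t - mu)" for t
  define F where "F t = - exp (- ((t - mu)^2) / 2)" for t
  have FTC: "(LBINT t = - \<infinity>..ereal t0. f t) = F t0 - 0"
  proof (rule interval_integral_FTC_integrable)
    show "(F has_vector_derivative f t) (at t)" for t
      unfolding F_def f_def has_real_derivative_iff_has_vector_derivative[symmetric]
      by (auto intro!: derivative_eq_intros simp: field_simps)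
    show "isCont f t" for t
      unfolding f_def by (auto intro!: continuous_intros)
    show "set_integrable lborel (einterval (- \<infinity>) (ereal t0)) f"
      using integrable_trunc_gauss(2)[of "{..<t0}" mu]
      by (simp add: set_integrable_def trunc_gauss_def f_def mult.assoc)
    show "((F \<circ> real_of_ereal) \<longlongrightarrow> 0) (at_right (- \<infinity>))"
      unfolding ereal_tendsto_simps F_def by real_asymp
    have "isCont F t0"
      unfolding F_def by (auto intro!: continuous_intros)
    then show "((F \<circ> real_of_ereal) \<longlongrightarrow> F t0) (at_left (ereal t0))"
      unfolding ereal_tendsto_simps by (simp add: isCont_def filterlim_at_split)
  qed simp
  have "(\<integral>t. trunc_gauss {..<t0} mu t * (t - mu) \<partial>lborel) = (LBINT t = - \<infinity>..ereal t0. f t)"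
    by (simp add: interval_lebesgue_integral_def set_lebesgue_integral_def trunc_gauss_def f_def mult.assoc)
  also have "\<dots> = F t0"
    using FTC by simp
  also have "\<dots> = - sqrt (2 * pi) * std_normal_density (t0 - mu)"
    by (simp add: F_def std_normal_density_def)
  finally show ?thesis .
qed

lemma integral_trunc_gauss_moment_symmetric:
  "(\<integral>t. trunc_gauss {-a..a} 0 t * (t - 0) \<partial>lborel) = 0"
proof -
  define f where "f t = trunc_gauss {-a..a} 0 t * (t - 0)" for t
  have "integral\<^sup>L lborel f = \<bar>-1\<bar> * (\<integral>s. f (0 + (-1) * s) \<partial>lborel)"
    using lborel_integral_real_affine[of "-1" f 0] by simp
  also have "(\<lambda>s. f (0 + (-1) * s)) = (\<lambda>s. - f s)"
    by (auto simp: f_def trunc_gauss_def fun_eq_iff indicator_def)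
  finally show ?thesis
    by (simp add: f_def)
qed

section \<open>The known-sign criterion\<close>

lemma one_plus_mult_pos:
  fixes p q c :: real
  assumes "0 < p" "\<bar>q\<bar> \<le> p" "c \<in> {- 1 / p<..<1 / p}"
  shows "0 < 1 + q * c"
proof -
  have "\<bar>c\<bar> < 1 / p"
    using assms(3) by (auto simp: abs_less_iff)
  then have "\<bar>c\<bar> * p < 1"
    using assms(1) by (simp add: pos_less_divide_eq)
  moreover have "\<bar>q * c\<bar> \<le> \<bar>c\<bar> * p"
    using mult_left_mono[OF assms(2), of "\<bar>c\<bar>"] by (simp add: abs_mult mult.commute)
  ultimately show ?thesis
    by (simp add: abs_le_iff)
qed

lemma PS_eq_mvn_prob:
  defines "k \<equiv> real CARD('a::finite)"
  assumes "0 < beta" "1 - c \<noteq> 0" "1 + (k - 1) * c \<noteq> 0"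
  shows "PS n lam c (\<chi> i::'a. beta) =
    mvn_prob (\<chi> i. lam * sqrt n / (1 + (k - 1) * c)) (matrix_inv (equicorr c :: real^'a^'a))
      {x. \<forall>i. x $ i \<in> {..<sqrt n * beta}}"
proof -
  have "(\<chi> i::'a. sgn ((\<chi> i::'a. beta) $ i)) = (\<chi> i. 1)"
    using assms(2) by (simp add: vec_eq_iff)
  moreover have "(lam * sqrt n) *\<^sub>R (matrix_inv (equicorr c :: real^'a^'a) *v (\<chi> i. 1))
      = (\<chi> i. lam * sqrt n / (1 + (k - 1) * c))"
    using assms(3,4) by (simp add: matrix_inv_equicorr_mult_vec_one k_def vec_eq_iff)
  ultimately show ?thesis
    by (simp add: PS_def Diag_one)
qed

lemma PI_eq_mvn_prob:
  defines "k \<equiv> real CARD('a::finite)"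
  assumes "1 - c \<noteq> 0" "1 + (k - 1) * c \<noteq> 0"
  shows "PI n lam c (\<chi> i::'a. 1) TYPE('b::finite) =
    mvn_prob (\<chi> i. lam * sqrt n * k * c / (1 + (k - 1) * c))
      (equi_mat (1 - c) (c * (1 - c) / (1 + (k - 1) * c)) :: real^'b^'b)
      {x. \<forall>i. x $ i \<in> {- (lam * sqrt n)..lam * sqrt n}}"
proof -
  let ?CAi = "matrix_inv (equicorr c :: real^'a^'a)"
  define D where "D = 1 + (k - 1) * c"
  have "D \<noteq> 0" "D - k * c = 1 - c"
    using assms(3) by (simp_all add: D_def algebra_simps)
  then have schur: "c - k * c * c / D = c * (1 - c) / D"
    by (simp add: field_simps flip: \<open>D - k * c = 1 - c\<close>)
  have "(offblock c :: real^'a^'b) ** ?CAi = (\<chi> i j. c * (1 / (1 - c) + - c / ((1 - c) * D) * k))"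
    using assms(2,3) by (simp add: matrix_inv_equicorr offblock_mult_equi_mat k_def D_def)
  also have "\<dots> = (\<chi> i j. c * (1 / D))"
    unfolding D_def equicorr_inverse_row_sum[OF assms(2,3)] ..
  finally have "(offblock c :: real^'a^'b) ** ?CAi = (\<chi> i j. c * (1 / D))" .
  then have "(equicorr c :: real^'b^'b) - (offblock c :: real^'a^'b) ** ?CAi ** (offblock c :: real^'b^'a)
      = equi_mat (1 - c) (c * (1 - c) / D)"
    by (simp add: const_mat_mult_offblock equicorr_eq_equi_mat equi_mat_minus_const k_def[symmetric] schur)
  moreover have "(lam * sqrt n) *\<^sub>R ((offblock c :: real^'a^'b) *v (?CAi *v (\<chi> i. 1)))
      = (\<chi> i. lam * sqrt n * k * c / D)"
    using assms(2,3) by (simp add: matrix_inv_equicorr_mult_vec_one offblock_mult_vec k_def D_def vec_eq_iff)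
  moreover have "{v :: real^'b. \<forall>i. \<bar>v $ i\<bar> \<le> lam * sqrt n} = {x. \<forall>i. x $ i \<in> {- (lam * sqrt n)..lam * sqrt n}}"
    by (auto simp: abs_le_iff minus_le_iff)
  ultimately show ?thesis
    by (simp add: PI_def Let_def D_def)
qed

lemma PS_has_real_derivative_moments:
  fixes n :: nat and lam beta :: real
  defines "k \<equiv> real CARD('a::finite)" and "l \<equiv> lam * sqrt n" and "T \<equiv> {..<sqrt n * beta}"
  defines "I0 \<equiv> \<integral>t. trunc_gauss T l t \<partial>lborel" and "I1 \<equiv> \<integral>t. trunc_gauss T l t * (t - l) \<partial>lborel"
  assumes beta: "0 < beta"
  shows "((\<lambda>c. PS n lam c (\<chi> i::'a. beta)) has_real_derivative
      (- l * (k - 1) * k * I1 * I0 ^ (CARD('a) - 1) - 1 / 2 * k * (k - 1) * I1^2 * I0 ^ (CARD('a) - 2))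
        / sqrt ((2 * pi) ^ CARD('a))) (at 0)" (is "(_ has_real_derivative ?V) _")
proof -
  define d where "d = 1 / k"
  define m' where "m' c = - l * (k - 1) / (1 + (k - 1) * c)^2" for c
  have k: "1 \<le> k"
    by (simp add: k_def)
  have denoms: "0 < 1 - c" "0 < 1 + (k - 1) * c" if "c \<in> {-d<..<d}" for c
    using one_plus_mult_pos[of k "-1" c] one_plus_mult_pos[of k "k - 1" c] k that by (simp_all add: d_def)
  have inv: "matrix_inv (equicorr c :: real^'a^'a) ** equi_mat (1 - c) c = mat 1" if "c \<in> {-d<..<d}" for c
    using matrix_inv_equicorr_mult[of c, where 'n='a] denoms[OF that] by (simp add: equicorr_eq_equi_mat k_def)
  have deriv: "((\<lambda>c. 1 - c) has_real_derivative - 1) (at c) \<and> ((\<lambda>c. c) has_real_derivative 1) (at c) \<and>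
      ((\<lambda>c. l / (1 + (k - 1) * c)) has_real_derivative m' c) (at c)" if "c \<in> {-d<..<d}" for c
    using denoms[OF that] unfolding m'_def
    by (auto intro!: derivative_eq_intros simp: power2_eq_square field_simps)
  have "isCont m' 0"
    unfolding m'_def by (auto intro!: continuous_intros)
  from mvn_prob_prod_set_has_real_derivative(1)[where Sig="\<lambda>c. matrix_inv (equicorr c)"
      and A="\<lambda>c. 1 - c" and B="\<lambda>c. c" and m="\<lambda>c. l / (1 + (k - 1) * c)" and A'="\<lambda>_. - 1" and B'="\<lambda>_. 1" and T=T and d=d,
      OF _ _ inv deriv continuous_const continuous_const this, unfolded k_def[symmetric]]
  have dM: "((\<lambda>c. mvn_prob (\<chi> i. l / (1 + (k - 1) * c)) (matrix_inv (equicorr c :: real^'a^'a)) {x. \<forall>i. x $ i \<in> T})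
      has_real_derivative ?V) (at 0)"
    using k by (simp add: T_def I0_def I1_def d_def m'_def)
  have PS_eq: "mvn_prob (\<chi> i. l / (1 + (k - 1) * c)) (matrix_inv (equicorr c :: real^'a^'a)) {x. \<forall>i. x $ i \<in> T}
      = PS n lam c (\<chi> i::'a. beta)" if "c \<in> {-d<..<d}" for c
    unfolding l_def T_def k_def using denoms[OF that] beta by (intro PS_eq_mvn_prob[symmetric]) (auto simp: k_def)
  show ?thesis
    by (rule has_field_derivative_transform_within_open[where S="{-d<..<d}", OF dM _ _ PS_eq]) (use k in \<open>simp_all add: d_def\<close>)
qed

lemma PS_has_real_derivative:
  fixes n :: nat and lam beta :: real
  defines "k \<equiv> real CARD('a::finite)" and "\<tau> \<equiv> sqrt n * (beta - lam)"
  assumes beta: "0 < beta" and card: "2 \<le> CARD('a)"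
  shows "((\<lambda>c. PS n lam c (\<chi> i::'a. beta)) has_real_derivative
      k * (k - 1) * pi * std_normal_density \<tau> * (2 * lam * sqrt n * std_normal_cdf \<tau> - std_normal_density \<tau>)
        * (sqrt (2 * pi) * std_normal_cdf \<tau>) ^ (CARD('a) - 2) / sqrt ((2 * pi) ^ CARD('a))) (at 0)"
proof -
  define r where "r = sqrt (2 * pi)"
  define G where "G = std_normal_cdf \<tau>"
  define g where "g = std_normal_density \<tau>"
  have I0: "(\<integral>t. trunc_gauss {..<sqrt n * beta} (lam * sqrt n) t \<partial>lborel) = r * G"
    using integral_trunc_gauss_halfline[of "sqrt n * beta" "lam * sqrt n"]
    by (simp add: \<tau>_def r_def G_def algebra_simps)
  have I1: "(\<integral>t. trunc_gauss {..<sqrt n * beta} (lam * sqrt n) t * (t - lam * sqrt n) \<partial>lborel) = - r * g"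
    using integral_trunc_gauss_moment_halfline[of "sqrt n * beta" "lam * sqrt n"]
    by (simp add: \<tau>_def r_def g_def algebra_simps)
  have pi: "pi = r * r / 2"
    by (simp add: r_def)
  have "CARD('a) - 1 = Suc (CARD('a) - 2)"
    using card by simp
  then have "- (lam * sqrt n) * (k - 1) * k * (- r * g) * (r * G) ^ (CARD('a) - 1)
        - 1 / 2 * k * (k - 1) * (- r * g)^2 * (r * G) ^ (CARD('a) - 2)
      = k * (k - 1) * pi * g * (2 * lam * sqrt n * G - g) * (r * G) ^ (CARD('a) - 2)"
    unfolding pi by (simp add: power2_eq_square field_simps)
  with PS_has_real_derivative_moments[OF beta, of n lam, where 'a='a] show ?thesis
    unfolding I0 I1 k_def[symmetric] by (simp add: r_def G_def g_def)
qed

lemma PI_has_real_derivative: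
  fixes n :: nat and lam :: real
  defines "l \<equiv> lam * sqrt n"
  shows "((\<lambda>c. PI n lam c (\<chi> i::'a::finite. 1) TYPE('b::finite)) has_real_derivative 0) (at 0)"
    and "PI n lam 0 (\<chi> i::'a. 1) TYPE('b) =
      (\<integral>t. trunc_gauss {-l..l} 0 t \<partial>lborel) ^ CARD('b) / sqrt ((2 * pi) ^ CARD('b))"
proof -
  define k where "k = real CARD('a)"
  define p where "p = k + real CARD('b)"
  define T where "T = {-l..l}"
  define d where "d = 1 / p"
  define Sig where "Sig c = (equi_mat (1 - c) (c * (1 - c) / (1 + (k - 1) * c)) :: real^'b^'b)" for c
  define B where "B c = - c / ((1 - c) * (1 + (p - 1) * c))" for c
  define A' where "A' c = 1 / (1 - c)^2" for c :: real
  define B' where "B' c = - ((1 + (p - 1) * c^2) / ((1 - c) * (1 + (p - 1) * c))^2)" for c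
  define m' where "m' c = l * k / (1 + (k - 1) * c)^2" for c
  have kp: "1 \<le> k" "k + 1 \<le> p"
    by (simp_all add: k_def p_def)
  have denoms: "0 < 1 - c" "0 < 1 + (k - 1) * c" "0 < 1 + (p - 1) * c" if "c \<in> {-d<..<d}" for c
    using one_plus_mult_pos[of p "-1" c] one_plus_mult_pos[of p "k - 1" c] one_plus_mult_pos[of p "p - 1" c] kp that
    by (simp_all add: d_def)
  have inv: "Sig c ** equi_mat (1 / (1 - c)) (B c) = mat 1" if "c \<in> {-d<..<d}" for c
    using equi_mat_schur_complement_mult_inverse[of c k, where 'n='b] denoms[OF that]
    by (simp add: Sig_def B_def p_def)
  have deriv: "((\<lambda>c. 1 / (1 - c)) has_real_derivative A' c) (at c) \<and> (B has_real_derivative B' c) (at c) \<and>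
      ((\<lambda>c. l * k * c / (1 + (k - 1) * c)) has_real_derivative m' c) (at c)" if "c \<in> {-d<..<d}" for c
  proof -
    have "1 - c \<noteq> 0" "1 + (k - 1) * c \<noteq> 0" "(1 - c) * (1 + (p - 1) * c) \<noteq> 0"
      using denoms[OF that] by auto
    then show ?thesis
      unfolding A'_def B_def B'_def m'_def
      by (auto intro!: derivative_eq_intros simp: power2_eq_square field_simps)
  qed
  have "isCont A' 0" "isCont B' 0" "isCont m' 0"
    unfolding A'_def B'_def m'_def by (auto intro!: continuous_intros)
  note central = mvn_prob_prod_set_has_real_derivative[where Sig=Sig and A="\<lambda>c. 1 / (1 - c)" and B=B
      and m="\<lambda>c. l * k * c / (1 + (k - 1) * c)" and A'=A' and B'=B' and m'=m' and T=T and d=d, OF _ _ inv deriv this]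
  have PI_eq: "mvn_prob (\<chi> i. l * k * c / (1 + (k - 1) * c)) (Sig c) {x. \<forall>i. x $ i \<in> T} = PI n lam c (\<chi> i::'a. 1) TYPE('b)"
    if "c \<in> {-d<..<d}" for c
    unfolding l_def T_def k_def Sig_def using denoms[OF that] by (intro PI_eq_mvn_prob[symmetric]) (auto simp: k_def)
  have d0: "0 \<in> {-d<..<d}"
    using kp by (simp add: d_def)
  have "(\<integral>t. trunc_gauss T 0 t * (t - 0) \<partial>lborel) = 0"
    unfolding T_def by (rule integral_trunc_gauss_moment_symmetric)
  then have dM: "((\<lambda>c. mvn_prob (\<chi> i. l * k * c / (1 + (k - 1) * c)) (Sig c) {x. \<forall>i. x $ i \<in> T})
      has_real_derivative 0) (at 0)"
    and M0: "mvn_prob (\<chi> i. 0) (Sig 0) {x. \<forall>i. x $ i \<in> T} =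
      (\<integral>t. trunc_gauss T 0 t \<partial>lborel) ^ CARD('b) / sqrt ((2 * pi) ^ CARD('b))"
    using central d0 by (simp_all add: T_def B_def A'_def B'_def)
  show "((\<lambda>c. PI n lam c (\<chi> i::'a. 1) TYPE('b)) has_real_derivative 0) (at 0)"
    by (rule has_field_derivative_transform_within_open[OF dM _ d0]) (simp_all add: PI_eq)
  show "PI n lam 0 (\<chi> i::'a. 1) TYPE('b) =
      (\<integral>t. trunc_gauss {-l..l} 0 t \<partial>lborel) ^ CARD('b) / sqrt ((2 * pi) ^ CARD('b))"
    using PI_eq[OF d0] M0 by (simp add: T_def)
qed

lemma PS_has_positive_derivative:
  fixes n :: nat and lam beta :: real
  assumes "0 < beta" "2 \<le> CARD('a::finite)"
    and "std_normal_density (sqrt n * (beta - lam)) / std_normal_cdf (sqrt n * (beta - lam)) < 2 * (lam * sqrt n)"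
  shows "\<exists>D>0. ((\<lambda>c. PS n lam c (\<chi> i::'a. beta)) has_real_derivative D) (at 0)"
proof -
  define G where "G = std_normal_cdf (sqrt n * (beta - lam))"
  define g where "g = std_normal_density (sqrt n * (beta - lam))"
  have G: "0 < G" and g: "0 < g"
    by (simp_all add: G_def g_def std_normal_cdf_pos normal_density_pos)
  then have "0 < 2 * lam * sqrt n * G - g"
    using assms(3) by (simp add: G_def g_def divide_less_eq)
  moreover have "0 < real CARD('a) * (real CARD('a) - 1)"
    using assms(2) by simp
  ultimately show ?thesis
    using PS_has_real_derivative[OF assms(1,2), of n lam] G g
    by (intro exI[of _ "_ / _"] conjI) (auto simp flip: G_def g_def intro!: divide_pos_pos mult_pos_pos)
qed

theorem theorem2:
  fixes n :: nat and lam beta :: real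
  assumes "n \<ge> 1"
    and "CARD('a::finite) \<ge> 2"
    and "beta > 0" and "lam > 0"
    and "2 * (lam * sqrt n) >
           std_normal_density (sqrt n * (beta - lam)) / std_normal_cdf (sqrt n * (beta - lam))"
  shows "(\<exists>D. ((\<lambda>c. psi TYPE('a) TYPE('b::finite) n lam beta c) has_real_derivative D) (at 0) \<and> D > 0)
     \<and> (\<exists>cl. 0 < cl \<and> cl < 1 \<and>
            psi TYPE('a) TYPE('b) n lam beta cl > psi TYPE('a) TYPE('b) n lam beta 0)"
proof -
  let ?psi = "\<lambda>c. psi TYPE('a) TYPE('b) n lam beta c"
  let ?PI0 = "PI n lam 0 (\<chi> i::'a. 1) TYPE('b)"
  obtain DS where "0 < DS" and dPS: "((\<lambda>c. PS n lam c (\<chi> i::'a. beta)) has_real_derivative DS) (at 0)"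
    using PS_has_positive_derivative[OF assms(3,2,5)] by blast
  have "0 < ?PI0"
    unfolding PI_has_real_derivative(2) using integral_trunc_gauss_symmetric_pos[of "lam * sqrt n" 0] assms(1,4)
    by simp
  with \<open>0 < DS\<close> have pos: "0 < DS * ?PI0"
    by simp
  have dpsi: "(?psi has_real_derivative DS * ?PI0) (at 0)"
    using DERIV_mult[OF dPS PI_has_real_derivative(1)] by (simp add: psi_def)
  obtain e where "0 < e" and "\<And>h. 0 < h \<Longrightarrow> h < e \<Longrightarrow> ?psi 0 < ?psi (0 + h)"
    using DERIV_pos_inc_right[OF dpsi pos] by blast
  then have "?psi 0 < ?psi (min (e / 2) (1 / 2))"
    by simp
  with \<open>0 < e\<close> have "\<exists>cl. 0 < cl \<and> cl < 1 \<and> ?psi 0 < ?psi cl"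
    by (intro exI[of _ "min (e / 2) (1 / 2)"]) auto
  with dpsi pos show ?thesis
    by blast
qed

end
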